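(* For real numbers $t_1,t_2,t_3$, let $$\rho^{(1)}_{AB}=\tfrac19\,\mathbb{1}_3\otimes\mathbb{1}_3+\tfrac14\big(t_1\,\lambda_1\otimes\lambda_1+t_2\,\lambda_2\otimes\lambda_2+t_3\,\lambda_3\otimes\lambda_3\big),$$ and assume $\rho^{(1)}_{AB}$ is positive semidefinite (a quantum state). Then $\rho^{(1)}_{AB}$ is separable if and only if $|t_1|+|t_2|+|t_3|\le\frac49$. Moreover, when $|t_1|+|t_2|+|t_3|\le\frac49$, a separable decomposition is obtained as follows. Choose real $\alpha_\mu,\beta_\mu$ with $\alpha_\mu\beta_\mu=t_\mu$ and $\sum_\mu\alpha_\mu^2\le\frac49$, $\sum_\mu\beta_\mu^2\le\frac49$. With the sign patterns $$\vec\epsilon^{(1)}=(1,-1,-1),\quad\vec\epsilon^{(2)}=(-1,-1,1),\quad\vec\epsilon^{(3)}=(-1,1,-1),\quad\vec\epsilon^{(4)}=(1,1,1),$$ one has $$\rho^{(1)}_{AB}=\sum_{i=1}^4\tfrac14\Big(\tfrac13\mathbb{1}+\tfrac12\sum_{\mu=1}^3\epsilon^{(i)}_\mu\alpha_\mu\lambda_\mu\Big)\otimes\Big(\tfrac13\mathbb{1}+\tfrac12\sum_{\mu=1}^3\epsilon^{(i)}_\mu\beta_\mu\lambda_\mu\Big),$$ where each factor is a density matrix.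
   Context: With $\{|1\rangle,|2\rangle,|3\rangle\}$ the standard basis of $\mathbb{C}^3$, the Gell-Mann matrices used here are: - $\lambda_1=|1\rangle\langle2|+|2\rangle\langle1|$, - $\lambda_2=-i|1\rangle\langle2|+i|2\rangle\langle1|$, - $\lambda_3=|1\rangle\langle1|-|2\rangle\langle2|$. A state is separable if it is a convex combination of tensor products of density matrices. *)

theory Defs
  imports "HOL-Analysis.Analysis" "HOL-Library.Numeral_Type"
begin

(* Matrices over C^3 are complex^3^3; the standard basis |1>,|2>,|3> corresponds
   to the indices 0,1,2 of the numeral type 3.  Operators on C^3 (x) C^3 are
   complex^(3*3)^(3*3), the pair (i,j) indexing |i>|j>. *)

type_synonym cmat3 = "complex^3^3"
type_synonym cmat9 = "complex^(3 \<times> 3)^(3 \<times> 3)"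

definition kron :: "complex^'a^'a \<Rightarrow> complex^'b^'b \<Rightarrow> complex^('a \<times> 'b)^('a \<times> 'b)" where
  "kron A B = (\<chi> p q. A $ fst p $ fst q * B $ snd p $ snd q)"

definition mtrace :: "complex^'n^'n \<Rightarrow> complex" where
  "mtrace A = (\<Sum>i\<in>UNIV. A $ i $ i)"

definition hermitian_mat :: "complex^'n^'n \<Rightarrow> bool" where
  "hermitian_mat A \<longleftrightarrow> (\<forall>i j. A $ i $ j = cnj (A $ j $ i))"

definition psd :: "complex^'n^'n \<Rightarrow> bool" where
  "psd A \<longleftrightarrow> hermitian_mat A \<and>
     (\<forall>x :: complex^'n. 0 \<le> Re (\<Sum>i\<in>UNIV. \<Sum>j\<in>UNIV. cnj (x $ i) * A $ i $ j * x $ j))"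

definition density_mat :: "complex^'n^'n \<Rightarrow> bool" where
  "density_mat A \<longleftrightarrow> psd A \<and> mtrace A = 1"

definition separable :: "complex^('a::finite \<times> 'b::finite)^('a \<times> 'b) \<Rightarrow> bool" where
  "separable R \<longleftrightarrow> (\<exists>(n::nat) (p::nat \<Rightarrow> real) (A::nat \<Rightarrow> complex^'a^'a) (B::nat \<Rightarrow> complex^'b^'b).
      (\<forall>k<n. 0 \<le> p k \<and> density_mat (A k) \<and> density_mat (B k)) \<and>
      (\<Sum>k<n. p k) = 1 \<and>
      R = (\<Sum>k<n. p k *\<^sub>R kron (A k) (B k)))"

definition gm :: "nat \<Rightarrow> cmat3" where
  "gm mu = (\<chi> i j.
     if mu = 1 then (if (i = 0 \<and> j = 1) \<or> (i = 1 \<and> j = 0) then 1 else 0)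
     else if mu = 2 then (if i = 0 \<and> j = 1 then - \<i> else if i = 1 \<and> j = 0 then \<i> else 0)
     else if mu = 3 then (if i = j \<and> i = 0 then 1 else if i = j \<and> i = 1 then -1 else 0)
     else 0)"

definition rho1 :: "(nat \<Rightarrow> real) \<Rightarrow> cmat9" where
  "rho1 t = (1/9) *\<^sub>R kron (mat 1) (mat 1)
            + (1/4) *\<^sub>R (\<Sum>mu\<in>{1,2,3}. t mu *\<^sub>R kron (gm mu) (gm mu))"

definition eps :: "nat \<Rightarrow> nat \<Rightarrow> real" where
  "eps i mu = (if i = 1 then (if mu = 1 then 1 else -1)
               else if i = 2 then (if mu = 3 then 1 else -1)
               else if i = 3 then (if mu = 2 then 1 else -1)
               else 1)"

definition bloch :: "(nat \<Rightarrow> real) \<Rightarrow> cmat3" where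
  "bloch c = (1/3) *\<^sub>R mat 1 + (1/2) *\<^sub>R (\<Sum>mu\<in>{1,2,3}. c mu *\<^sub>R gm mu)"

end

theory Submission
  imports Defs
begin

text \<open>
  For Hermitian \<open>A\<close> on \<open>\<complex>\<^sup>3\<close> let \<open>a\<^sub>\<mu> = tr (\<lambda>\<^sub>\<mu> A)\<close> and \<open>w = tr (P A)\<close>, where \<open>P\<close> is the
  projector onto the span of \<open>|1\<rangle>\<close> and \<open>|2\<rangle>\<close>. Positivity of the upper left 2x2 block of \<open>A\<close>
  says exactly that \<open>\<Sum>\<^sub>\<mu> a\<^sub>\<mu>\<^sup>2 \<le> w\<^sup>2\<close>. Pairing \<open>\<rho>\<close> with \<open>\<lambda>\<^sub>\<mu> \<otimes> \<lambda>\<^sub>\<mu>\<close> and with \<open>P \<otimes> P\<close> gives \<open>t\<^sub>\<mu>\<close>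
  and \<open>4/9\<close>, while on a product \<open>A \<otimes> B\<close> these pairings factor as \<open>a\<^sub>\<mu> b\<^sub>\<mu>\<close> and \<open>w\<^sub>A w\<^sub>B\<close>.
  So if \<open>\<rho> = \<Sum>\<^sub>k p\<^sub>k A\<^sub>k \<otimes> B\<^sub>k\<close>, Cauchy-Schwarz gives
  \<open>\<Sum>\<^sub>\<mu> |t\<^sub>\<mu>| \<le> \<Sum>\<^sub>k p\<^sub>k \<Sum>\<^sub>\<mu> |a\<^sub>\<mu> b\<^sub>\<mu>| \<le> \<Sum>\<^sub>k p\<^sub>k w\<^sub>A w\<^sub>B = 4/9\<close>.
  Conversely, \<open>\<one>/3 + \<Sum>\<^sub>\<mu> c\<^sub>\<mu> \<lambda>\<^sub>\<mu>/2\<close> is a density matrix whenever \<open>\<Sum>\<^sub>\<mu> c\<^sub>\<mu>\<^sup>2 \<le> 4/9\<close>, again by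
  Cauchy-Schwarz, and \<open>\<alpha>\<^sub>\<mu> = sgn t\<^sub>\<mu> \<surd>|t\<^sub>\<mu>|\<close>, \<open>\<beta>\<^sub>\<mu> = \<surd>|t\<^sub>\<mu>|\<close> turn the four-term
  decomposition into a separable one.
\<close>

lemma UNIV_3_eq: "(UNIV :: 3 set) = {0, 1, 2}"
proof -
  have "(3::3) = 0" by simp
  then show ?thesis using UNIV_3 by auto
qed

lemma sum_UNIV_3: "(\<Sum>i\<in>UNIV. f (i::3)) = f 0 + f 1 + f 2"
  unfolding UNIV_3_eq by (simp add: add.assoc)

lemma all_3: "(\<forall>i::3. P i) \<longleftrightarrow> P 0 \<and> P 1 \<and> P 2"
  by (metis UNIV_I UNIV_3_eq empty_iff insert_iff)

lemmas sum_UNIV_prod = sum.cartesian_product'[of _ UNIV UNIV, unfolded UNIV_Times_UNIV]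

lemma kron_component [simp]: "kron A B $ (a, b) $ (c, d) = A $ a $ c * B $ b $ d"
  by (simp add: kron_def)

lemma kron_mult_kron: "kron A B ** kron C D = kron (A ** C) (B ** D)"
proof -
  have "(kron A B ** kron C D) $ (a, b) $ (c, d) = (A ** C) $ a $ c * (B ** D) $ b $ d" for a b c d
    unfolding matrix_matrix_mult_def vec_lambda_beta sum_UNIV_prod sum_product
    by (rule sum.cong[OF refl], rule sum.cong[OF refl]) (simp add: mult_ac)
  then show ?thesis
    by (simp add: vec_eq_iff kron_def)
qed

lemma trace_kron: "trace (kron A B) = trace A * trace B"
  unfolding trace_def sum_UNIV_prod sum_product by simp

lemma linear_trace_mult: "linear (\<lambda>A. trace ((X :: 'a::real_algebra_1^'n^'n) ** A))"
proof (rule linearI)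
  show "trace (X ** (A + B)) = trace (X ** A) + trace (X ** B)" for A B
    by (simp add: matrix_add_ldistrib trace_def sum.distrib)
  show "trace (X ** (c *\<^sub>R A)) = c *\<^sub>R trace (X ** A)" for c A
    by (simp add: trace_def matrix_matrix_mult_def scaleR_sum_right)
qed

lemma hermitian_cnj_component: "hermitian_mat A \<Longrightarrow> cnj (A $ i $ j) = A $ j $ i"
  unfolding hermitian_mat_def by (metis complex_cnj_cnj)

lemma hermitian_trace_mult_real:
  assumes "hermitian_mat X" "hermitian_mat A"
  shows "trace (X ** A) \<in> \<real>"
proof -
  have "cnj (trace (X ** A)) = (\<Sum>i\<in>UNIV. \<Sum>j\<in>UNIV. X $ j $ i * A $ i $ j)"
    unfolding trace_def matrix_matrix_mult_def by (simp add: hermitian_cnj_component assms)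
  also have "\<dots> = (\<Sum>j\<in>UNIV. \<Sum>i\<in>UNIV. X $ j $ i * A $ i $ j)"
    by (rule sum.swap)
  also have "\<dots> = trace (X ** A)"
    unfolding trace_def matrix_matrix_mult_def by simp
  finally show ?thesis by (simp add: Reals_cnj_iff)
qed

definition expval :: "complex^'n^'n \<Rightarrow> complex^'n^'n \<Rightarrow> real" where
  "expval X A = Re (trace (X ** A))"

lemma expval_sum_scaleR: "expval X (\<Sum>k\<in>S. c k *\<^sub>R M k) = (\<Sum>k\<in>S. c k * expval X (M k))"
  by (simp add: expval_def linear_sum[OF linear_trace_mult] linear_scale[OF linear_trace_mult] Re_sum)

lemma trace_mult_hermitian:
  "hermitian_mat X \<Longrightarrow> hermitian_mat A \<Longrightarrow> trace (X ** A) = of_real (expval X A)"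
  by (simp add: expval_def hermitian_trace_mult_real)

lemma expval_kron:
  assumes "hermitian_mat X" "hermitian_mat Y" "hermitian_mat A" "hermitian_mat B"
  shows "expval (kron X Y) (kron A B) = expval X A * expval Y B"
  using assms unfolding expval_def[of "kron X Y"]
  by (simp add: kron_mult_kron trace_kron trace_mult_hermitian)

lemma sum_abs_mult_le:
  fixes x y :: "'a \<Rightarrow> real"
  assumes "(\<Sum>i\<in>I. (x i)\<^sup>2) \<le> a\<^sup>2" "(\<Sum>i\<in>I. (y i)\<^sup>2) \<le> b\<^sup>2" "0 \<le> a" "0 \<le> b"
  shows "(\<Sum>i\<in>I. \<bar>x i * y i\<bar>) \<le> a * b"
proof (rule power2_le_imp_le)
  have "(\<Sum>i\<in>I. \<bar>x i * y i\<bar>)\<^sup>2 \<le> (\<Sum>i\<in>I. \<bar>x i\<bar>\<^sup>2) * (\<Sum>i\<in>I. \<bar>y i\<bar>\<^sup>2)"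
    unfolding abs_mult by (rule Cauchy_Schwarz_ineq_sum)
  also have "\<dots> \<le> a\<^sup>2 * b\<^sup>2"
    using assms by (simp add: mult_mono sum_nonneg)
  finally show "(\<Sum>i\<in>I. \<bar>x i * y i\<bar>)\<^sup>2 \<le> (a * b)\<^sup>2"
    by (simp add: power_mult_distrib)
qed (use assms in simp)

lemma nonneg_binary_hermitian_form:
  fixes p q :: real and z :: complex
  assumes form: "\<And>u v. 0 \<le> p * (cmod u)\<^sup>2 + q * (cmod v)\<^sup>2 + 2 * Re (cnj u * z * v)"
  shows "0 \<le> p" "0 \<le> q" "(cmod z)\<^sup>2 \<le> p * q"
proof -
  show p: "0 \<le> p" using form[of 1 0] by simp
  show q: "0 \<le> q" using form[of 0 1] by simp
  \<comment> \<open>three test vectors, one for each of the cases \<open>q > 0\<close>, \<open>p > 0\<close>, \<open>p = q = 0\<close>\<close>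
  have h1: "0 \<le> q * (p * q - (cmod z)\<^sup>2)"
    using form[of "of_real q" "- cnj z"]
    by (simp add: cmod_power2 algebra_simps) (simp add: power2_eq_square algebra_simps)
  have h2: "0 \<le> p * (p * q - (cmod z)\<^sup>2)"
    using form[of "- z" "of_real p"]
    by (simp add: cmod_power2 algebra_simps) (simp add: power2_eq_square algebra_simps)
  have h3: "0 \<le> p + (q - 2) * (cmod z)\<^sup>2"
    using form[of 1 "- cnj z"]
    by (simp add: cmod_power2 algebra_simps) (simp add: power2_eq_square algebra_simps)
  show "(cmod z)\<^sup>2 \<le> p * q"
  proof (cases "0 < p \<or> 0 < q")
    case True
    then show ?thesis using h1 h2 by (auto simp: zero_le_mult_iff)
  next
    case False
    then show ?thesis using p q h3 by simp
  qed
qed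

lemma psd_two_point_form:
  assumes "psd A" "i \<noteq> j"
  shows "0 \<le> Re (A$i$i) * (cmod u)\<^sup>2 + Re (A$j$j) * (cmod v)\<^sup>2 + 2 * Re (cnj u * A$i$j * v)"
proof -
  have h: "hermitian_mat A" using assms(1) unfolding psd_def by blast
  have Aji: "A$j$i = cnj (A$i$j)" using hermitian_cnj_component[OF h, of i j] by simp
  have diag: "Im (A$i$i) = 0" "Im (A$j$j) = 0"
    using hermitian_cnj_component[OF h, of i i] hermitian_cnj_component[OF h, of j j]
    by (simp_all add: complex_eq_iff)
  define x where "x = axis i u + axis j v"
  have x: "x $ k = (if k = i then u else 0) + (if k = j then v else 0)" for k
    by (simp add: x_def axis_def)
  have "0 \<le> Re (\<Sum>k\<in>UNIV. \<Sum>l\<in>UNIV. cnj (x $ k) * A $ k $ l * x $ l)"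
    using assms(1) unfolding psd_def by blast
  also have "(\<Sum>k\<in>UNIV. \<Sum>l\<in>UNIV. cnj (x $ k) * A $ k $ l * x $ l)
      = cnj u * A$i$i * u + cnj u * A$i$j * v + cnj v * A$j$i * u + cnj v * A$j$j * v"
    using assms(2) by (simp add: x distrib_left distrib_right sum.distrib if_distrib[of cnj]
        if_distrib[of "\<lambda>y. y * _"] if_distrib[of "\<lambda>y. _ * y"] cong: if_cong)
  also have "Re \<dots> = Re (A$i$i) * (cmod u)\<^sup>2 + Re (A$j$j) * (cmod v)\<^sup>2 + 2 * Re (cnj u * A$i$j * v)"
    by (simp add: Aji diag cmod_power2 algebra_simps) (simp add: power2_eq_square algebra_simps)
  finally show ?thesis .
qed

lemma scaleR_matrix_component:
  "(r *\<^sub>R M) $ i $ j = complex_of_real r * (M :: complex^'n^'m) $ i $ j"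
  by (simp only: vector_scaleR_component) (simp add: scaleR_conv_of_real)

lemma gm_component [simp]:
  "gm mu $ 0 $ 0 = (if mu = 3 then 1 else 0)"
  "gm mu $ 1 $ 1 = (if mu = 3 then -1 else 0)"
  "gm mu $ 0 $ 1 = (if mu = 1 then 1 else if mu = 2 then -\<i> else 0)"
  "gm mu $ 1 $ 0 = (if mu = 1 then 1 else if mu = 2 then \<i> else 0)"
  "gm mu $ 2 $ 2 = 0" "gm mu $ 0 $ 2 = 0" "gm mu $ 2 $ 0 = 0" "gm mu $ 1 $ 2 = 0" "gm mu $ 2 $ 1 = 0"
  unfolding gm_def by simp_all

definition proj12 :: cmat3 where
  "proj12 = (\<chi> i j. if i = j \<and> i \<noteq> 2 then 1 else 0)"

lemma proj12_component [simp]: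
  "proj12 $ 0 $ 0 = 1" "proj12 $ 1 $ 1 = 1" "proj12 $ 2 $ 2 = 0"
  "proj12 $ 0 $ 1 = 0" "proj12 $ 1 $ 0 = 0" "proj12 $ 0 $ 2 = 0" "proj12 $ 2 $ 0 = 0"
  "proj12 $ 1 $ 2 = 0" "proj12 $ 2 $ 1 = 0"
  unfolding proj12_def by simp_all

lemma hermitian_gm: "hermitian_mat (gm mu)"
  unfolding hermitian_mat_def all_3 by simp

lemma hermitian_proj12: "hermitian_mat proj12"
  unfolding hermitian_mat_def all_3 by simp

lemma trace_gm_mult_gm:
  "mu \<in> {1,2,3} \<Longrightarrow> nu \<in> {1,2,3} \<Longrightarrow> trace (gm mu ** gm nu) = (if mu = nu then 2 else 0)"
  by (auto simp: trace_def matrix_matrix_mult_def sum_UNIV_3)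

lemma trace_proj12_mult_gm: "trace (proj12 ** gm mu) = 0"
  by (simp add: trace_def matrix_matrix_mult_def sum_UNIV_3)

lemma trace_gm: "trace (gm mu) = 0"
  by (simp add: trace_def sum_UNIV_3)

lemma trace_proj12: "trace proj12 = 2"
  by (simp add: trace_def sum_UNIV_3)

lemma trace_kron_mult_rho1:
  "trace (kron X Y ** rho1 t) = trace X * trace Y / 9
     + (\<Sum>mu\<in>{1,2,3}. of_real (t mu) * trace (X ** gm mu) * trace (Y ** gm mu)) / 4"
  unfolding rho1_def linear_add[OF linear_trace_mult] linear_scale[OF linear_trace_mult]
    linear_sum[OF linear_trace_mult] kron_mult_kron trace_kron matrix_mul_rid
  by (simp add: scaleR_conv_of_real sum_divide_distrib)

lemma expval_gm_rho1: "nu \<in> {1,2,3} \<Longrightarrow> expval (kron (gm nu) (gm nu)) (rho1 t) = t nu"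
  by (auto simp: expval_def trace_kron_mult_rho1 trace_gm trace_gm_mult_gm)

lemma expval_proj12_rho1: "expval (kron proj12 proj12) (rho1 t) = 4/9"
  by (simp add: expval_def trace_kron_mult_rho1 trace_proj12 trace_proj12_mult_gm)

lemma expval_gm_hermitian:
  assumes "hermitian_mat A"
  shows "expval (gm 1) A = 2 * Re (A$0$1)" "expval (gm 2) A = - 2 * Im (A$0$1)"
    "expval (gm 3) A = Re (A$0$0) - Re (A$1$1)" "expval proj12 A = Re (A$0$0) + Re (A$1$1)"
proof -
  have "A$1$0 = cnj (A$0$1)" using hermitian_cnj_component[OF assms, of 0 1] by simp
  then show "expval (gm 1) A = 2 * Re (A$0$1)" "expval (gm 2) A = - 2 * Im (A$0$1)"
    "expval (gm 3) A = Re (A$0$0) - Re (A$1$1)" "expval proj12 A = Re (A$0$0) + Re (A$1$1)"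
    by (simp_all add: expval_def trace_def matrix_matrix_mult_def sum_UNIV_3)
qed

lemma psd_bloch_bound:
  assumes "psd A"
  shows "(\<Sum>mu\<in>{1,2,3}. (expval (gm mu) A)\<^sup>2) \<le> (expval proj12 A)\<^sup>2" "0 \<le> expval proj12 A"
proof -
  have h: "hermitian_mat A" using assms unfolding psd_def by blast
  have "0 \<le> Re (A$0$0) * (cmod u)\<^sup>2 + Re (A$1$1) * (cmod v)\<^sup>2 + 2 * Re (cnj u * A$0$1 * v)" for u v
    by (rule psd_two_point_form[OF assms]) simp
  note block = nonneg_binary_hermitian_form[OF this]
  have "(\<Sum>mu\<in>{1,2,3}. (expval (gm mu) A)\<^sup>2) = 4 * (cmod (A$0$1))\<^sup>2 + (Re (A$0$0) - Re (A$1$1))\<^sup>2"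
    using expval_gm_hermitian[OF h] by (simp add: cmod_power2 power_mult_distrib)
  also have "\<dots> \<le> (Re (A$0$0) + Re (A$1$1))\<^sup>2"
    using block(3) by (simp add: power2_eq_square algebra_simps)
  finally show "(\<Sum>mu\<in>{1,2,3}. (expval (gm mu) A)\<^sup>2) \<le> (expval proj12 A)\<^sup>2"
    by (simp add: expval_gm_hermitian[OF h])
  show "0 \<le> expval proj12 A"
    using block(1,2) by (simp add: expval_gm_hermitian[OF h])
qed

lemma bloch_component [simp]:
  "bloch c $ 0 $ 0 = 1/3 + of_real (c 3) / 2"
  "bloch c $ 1 $ 1 = 1/3 - of_real (c 3) / 2"
  "bloch c $ 2 $ 2 = 1/3"
  "bloch c $ 0 $ 1 = (of_real (c 1) - \<i> * of_real (c 2)) / 2"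
  "bloch c $ 1 $ 0 = (of_real (c 1) + \<i> * of_real (c 2)) / 2"
  "bloch c $ 0 $ 2 = 0" "bloch c $ 2 $ 0 = 0" "bloch c $ 1 $ 2 = 0" "bloch c $ 2 $ 1 = 0"
  unfolding bloch_def
  by (simp_all add: mat_def scaleR_matrix_component field_simps del: vector_scaleR_component)

lemma bloch_quadratic_form:
  fixes x :: "complex^3"
  defines "z \<equiv> cnj (x$0) * x$1"
  shows "Re (\<Sum>i\<in>UNIV. \<Sum>j\<in>UNIV. cnj (x $ i) * bloch c $ i $ j * x $ j)
    = ((cmod (x$0))\<^sup>2 + (cmod (x$1))\<^sup>2 + (cmod (x$2))\<^sup>2) / 3
      + (c 1 * (2 * Re z) + c 2 * (2 * Im z) + c 3 * ((cmod (x$0))\<^sup>2 - (cmod (x$1))\<^sup>2)) / 2"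
  unfolding z_def by (simp add: sum_UNIV_3 cmod_power2 algebra_simps) (simp add: power2_eq_square field_simps)

lemma density_mat_bloch:
  assumes "(\<Sum>mu\<in>{1,2,3}. (c mu)\<^sup>2) \<le> 4/9"
  shows "density_mat (bloch c)"
proof -
  have "hermitian_mat (bloch c)"
    unfolding hermitian_mat_def all_3 by (simp add: complex_cnj_diff)
  moreover have "mtrace (bloch c) = 1"
    by (simp add: mtrace_def sum_UNIV_3)
  moreover have "0 \<le> Re (\<Sum>i\<in>UNIV. \<Sum>j\<in>UNIV. cnj (x $ i) * bloch c $ i $ j * x $ j)" for x
  proof -
    define z where "z = cnj (x$0) * x$1"
    define n0 n1 where "n0 = (cmod (x$0))\<^sup>2" and "n1 = (cmod (x$1))\<^sup>2"
    define w :: "nat \<Rightarrow> real"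
      where "w mu = (if mu = 1 then 2 * Re z else if mu = 2 then 2 * Im z else n0 - n1)" for mu
    have "(\<Sum>mu\<in>{1,2,3}. (w mu)\<^sup>2) = 4 * (cmod z)\<^sup>2 + (n0 - n1)\<^sup>2"
      by (simp add: w_def cmod_power2 power_mult_distrib)
    also have "\<dots> = (n0 + n1)\<^sup>2"
      by (simp add: z_def n0_def n1_def norm_mult power_mult_distrib power2_eq_square algebra_simps)
    finally have "(\<Sum>mu\<in>{1,2,3}. (w mu)\<^sup>2) \<le> (n0 + n1)\<^sup>2" by simp
    moreover have "(\<Sum>mu\<in>{1,2,3}. (c mu)\<^sup>2) \<le> (2/3)\<^sup>2"
      using assms by (simp add: power_divide)
    ultimately have "(\<Sum>mu\<in>{1,2,3}. \<bar>c mu * w mu\<bar>) \<le> 2/3 * (n0 + n1)"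
      by (intro sum_abs_mult_le) (simp_all add: n0_def n1_def)
    moreover have "- (\<Sum>mu\<in>{1,2,3}. c mu * w mu) \<le> (\<Sum>mu\<in>{1,2,3}. \<bar>c mu * w mu\<bar>)"
      using sum_abs[of "\<lambda>mu. c mu * w mu" "{1,2,3}"] abs_le_iff by blast
    moreover have "0 \<le> (cmod (x$2))\<^sup>2" by simp
    moreover have "Re (\<Sum>i\<in>UNIV. \<Sum>j\<in>UNIV. cnj (x $ i) * bloch c $ i $ j * x $ j)
        = (n0 + n1 + (cmod (x$2))\<^sup>2) / 3 + (\<Sum>mu\<in>{1,2,3}. c mu * w mu) / 2"
      unfolding bloch_quadratic_form by (simp add: w_def z_def n0_def n1_def)
    ultimately show ?thesis by argo
  qed
  ultimately show ?thesis
    unfolding density_mat_def psd_def by blast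
qed

lemma density_mat_bloch_eps:
  assumes "(\<Sum>mu\<in>{1,2,3}. (c mu)\<^sup>2) \<le> 4/9"
  shows "density_mat (bloch (\<lambda>mu. eps i mu * c mu))"
proof (rule density_mat_bloch)
  have "(eps i mu * c mu)\<^sup>2 = (c mu)\<^sup>2" for mu
    by (simp add: eps_def power_mult_distrib)
  then show "(\<Sum>mu\<in>{1,2,3}. (eps i mu * c mu)\<^sup>2) \<le> 4/9"
    using assms by presburger
qed

lemma rho1_eq_sum_bloch_kron:
  assumes "\<forall>mu\<in>{1,2,3}. \<alpha> mu * \<beta> mu = t mu"
  shows "rho1 t = (\<Sum>i\<in>{1,2,3,4}. (1/4) *\<^sub>R
                     kron (bloch (\<lambda>mu. eps i mu * \<alpha> mu)) (bloch (\<lambda>mu. eps i mu * \<beta> mu)))"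
proof -
  \<comment> \<open>entrywise; the sign patterns satisfy \<open>\<Sum>\<^sub>i \<epsilon>\<^sub>\<mu> \<epsilon>\<^sub>\<nu> = 4 \<delta>\<^sub>\<mu>\<^sub>\<nu>\<close> and \<open>\<Sum>\<^sub>i \<epsilon>\<^sub>\<mu> = 0\<close>\<close>
  have t: "t 1 = \<alpha> 1 * \<beta> 1" "t 2 = \<alpha> 2 * \<beta> 2" "t 3 = \<alpha> 3 * \<beta> 3"
    using assms by auto
  show ?thesis
    unfolding vec_eq_iff split_paired_All all_3 rho1_def
    by (simp del: vector_scaleR_component
        add: scaleR_matrix_component mat_def eps_def t t(1)[unfolded One_nat_def] field_simps)
qed

lemma separable_rho1_bound:
  assumes "separable (rho1 t)"
  shows "\<bar>t 1\<bar> + \<bar>t 2\<bar> + \<bar>t 3\<bar> \<le> 4/9"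
proof -
  obtain n p and A B :: "nat \<Rightarrow> cmat3" where
    comp: "\<And>k. k < n \<Longrightarrow> 0 \<le> p k \<and> density_mat (A k) \<and> density_mat (B k)" and
    decomp: "rho1 t = (\<Sum>k<n. p k *\<^sub>R kron (A k) (B k))"
    using assms unfolding separable_def by blast
  have p: "0 \<le> p k" and psdA: "psd (A k)" and psdB: "psd (B k)" if "k < n" for k
    using comp[OF that] unfolding density_mat_def by auto
  have expval_rho1: "expval (kron X X) (rho1 t) = (\<Sum>k<n. p k * (expval X (A k) * expval X (B k)))"
    if "hermitian_mat X" for X
    unfolding decomp expval_sum_scaleR
    using that psdA psdB by (intro sum.cong) (simp_all add: expval_kron psd_def)
  have "\<bar>t 1\<bar> + \<bar>t 2\<bar> + \<bar>t 3\<bar> = (\<Sum>mu\<in>{1,2,3}. \<bar>expval (kron (gm mu) (gm mu)) (rho1 t)\<bar>)"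
    by (simp add: expval_gm_rho1)
  also have "\<dots> \<le> (\<Sum>mu\<in>{1,2,3}. \<Sum>k<n. p k * \<bar>expval (gm mu) (A k) * expval (gm mu) (B k)\<bar>)"
    unfolding expval_rho1[OF hermitian_gm]
    by (intro sum_mono order_trans[OF sum_abs]) (simp add: abs_mult p)
  also have "\<dots> = (\<Sum>k<n. p k * (\<Sum>mu\<in>{1,2,3}. \<bar>expval (gm mu) (A k) * expval (gm mu) (B k)\<bar>))"
    unfolding sum_distrib_left by (rule sum.swap)
  also have "\<dots> \<le> (\<Sum>k<n. p k * (expval proj12 (A k) * expval proj12 (B k)))"
    using p psd_bloch_bound[OF psdA] psd_bloch_bound[OF psdB]
    by (intro sum_mono mult_left_mono sum_abs_mult_le) auto
  also have "\<dots> = 4/9"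
    using expval_rho1[OF hermitian_proj12] by (simp add: expval_proj12_rho1)
  finally show ?thesis .
qed

lemma separable_rho1:
  assumes "\<bar>t 1\<bar> + \<bar>t 2\<bar> + \<bar>t 3\<bar> \<le> 4/9"
  shows "separable (rho1 t)"
proof -
  define \<alpha> where "\<alpha> mu = sgn (t mu) * sqrt \<bar>t mu\<bar>" for mu
  define \<beta> where "\<beta> mu = sqrt \<bar>t mu\<bar>" for mu
  have "\<forall>mu\<in>{1,2,3}. \<alpha> mu * \<beta> mu = t mu"
    unfolding \<alpha>_def \<beta>_def by (auto simp: mult.assoc sgn_mult_abs)
  note decomp = rho1_eq_sum_bloch_kron[OF this]
  have "(\<alpha> mu)\<^sup>2 = \<bar>t mu\<bar>" "(\<beta> mu)\<^sup>2 = \<bar>t mu\<bar>" for mu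
    unfolding \<alpha>_def \<beta>_def by (simp_all add: power_mult_distrib sgn_if)
  then have "(\<Sum>mu\<in>{1,2,3}. (\<alpha> mu)\<^sup>2) \<le> 4/9" "(\<Sum>mu\<in>{1,2,3}. (\<beta> mu)\<^sup>2) \<le> 4/9"
    using assms by simp_all
  note density = this[THEN density_mat_bloch_eps]
  have "(\<Sum>i\<in>{1,2,3,4}. f i) = (\<Sum>k<4. f (Suc k))" for f :: "nat \<Rightarrow> cmat9"
    by (simp add: numeral_eq_Suc lessThan_Suc add_ac)
  then show ?thesis
    unfolding separable_def decomp using density
    by (intro exI[of _ 4] exI[of _ "\<lambda>_. 1/4"] exI[of _ "\<lambda>k. bloch (\<lambda>mu. eps (Suc k) mu * \<alpha> mu)"]
        exI[of _ "\<lambda>k. bloch (\<lambda>mu. eps (Suc k) mu * \<beta> mu)"]) simp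
qed

theorem mainTheorem5:
  fixes t :: "nat \<Rightarrow> real"
  assumes "psd (rho1 t)"
  shows "(separable (rho1 t) \<longleftrightarrow> \<bar>t 1\<bar> + \<bar>t 2\<bar> + \<bar>t 3\<bar> \<le> 4/9) \<and>
    (\<bar>t 1\<bar> + \<bar>t 2\<bar> + \<bar>t 3\<bar> \<le> 4/9 \<longrightarrow>
      (\<forall>\<alpha> \<beta> :: nat \<Rightarrow> real.
         (\<forall>mu\<in>{1,2,3}. \<alpha> mu * \<beta> mu = t mu) \<and>
         (\<Sum>mu\<in>{1,2,3}. (\<alpha> mu)\<^sup>2) \<le> 4/9 \<and> (\<Sum>mu\<in>{1,2,3}. (\<beta> mu)\<^sup>2) \<le> 4/9 \<longrightarrow>
         rho1 t = (\<Sum>i\<in>{1,2,3,4}. (1/4) *\<^sub>R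
                     kron (bloch (\<lambda>mu. eps i mu * \<alpha> mu)) (bloch (\<lambda>mu. eps i mu * \<beta> mu))) \<and>
         (\<forall>i\<in>{1,2,3,4}. density_mat (bloch (\<lambda>mu. eps i mu * \<alpha> mu)) \<and>
                           density_mat (bloch (\<lambda>mu. eps i mu * \<beta> mu)))))"
  using separable_rho1_bound separable_rho1 rho1_eq_sum_bloch_kron density_mat_bloch_eps by blast

end
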